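(* For a positive integer $N$ and $0\le i\le 4$, let $\mathcal S_i$ be the set of pairs $(A,B)$ of $3\times 3$ matrices with entries in $[-N,N]\cap\mathbb{Z}$, written \[ A = \begin{pmatrix} a_1 & a_2 & a_3 \\ a_4 & a_5 & a_6 \\ a_7 & a_8 & a_9 \end{pmatrix},\qquad B = \begin{pmatrix} b_1 & b_2 & b_3 \\ b_4 & b_5 & b_6 \\ b_7 & b_8 & b_9 \end{pmatrix}, \] such that $AB=BA$ and the $6\times 4$ matrix \[ M = \begin{pmatrix} -b_2 & a_2 & 0 & 0 \\ b_4 & -a_4 & 0 & 0 \\ 0 & 0 & -b_3 & a_3 \\ 0 & 0 & b_7 & -a_7 \\ b_8 & -a_8 & -b_8 & a_8 \\ -b_6 & a_6 & b_6 & -a_6 \end{pmatrix} \] has rank $i$. Then there is an absolute constant $C>0$ such that for all integers $N\ge 2$, \[ |\mathcal S_0|+|\mathcal S_1|+|\mathcal S_3| \le C N^9(\log N)^3. \] *)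

theory Defs
  imports "HOL-Analysis.Analysis"
begin

text \<open>3x3 integer matrices are \<open>int^3^3\<close>; entry a_k of the paper with k = 3(i-1)+j
  is \<open>A $ i $ j\<close> for i, j in {1,2,3}.\<close>

definition Mmat :: "int^3^3 \<Rightarrow> int^3^3 \<Rightarrow> real^4^6" where
  "Mmat A B = (let a = (\<lambda>i j. real_of_int (A $ i $ j)); b = (\<lambda>i j. real_of_int (B $ i $ j)) in
     vector [
       vector [- b 1 2, a 1 2, 0, 0],
       vector [b 2 1, - a 2 1, 0, 0],
       vector [0, 0, - b 1 3, a 1 3],
       vector [0, 0, b 3 1, - a 3 1],
       vector [b 3 2, - a 3 2, - b 3 2, a 3 2],
       vector [- b 2 3, a 2 3, b 2 3, - a 2 3]])"

definition S_set :: "int \<Rightarrow> nat \<Rightarrow> ((int^3^3) \<times> (int^3^3)) set" where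
  "S_set N r = {(A, B). (\<forall>i j. \<bar>A $ i $ j\<bar> \<le> N \<and> \<bar>B $ i $ j\<bar> \<le> N) \<and>
      A ** B = B ** A \<and> rank (Mmat A B) = r}"

end

theory Submission
  imports Defs
begin

text \<open>Split a pair (A, B) into its key -- the off-diagonal entries of A and B together with
  (a9, b9) -- and the vector d = (a1 - a5, b1 - b5, a1 - a9, b1 - b9) of diagonal differences.
  The six off-diagonal entries of AB = BA say that M d depends on the key only, so within a fibre
  of the key the vectors d differ by null vectors of M. As d has entries in [-2N, 2N], a fibre
  contains at most (4N + 1)^(4 - rank M) pairs. Rank 0 forces all
  off-diagonal entries to vanish; rank 1 leaves at most one of the three blocks
  (a_ij, b_ij), (a_ji, b_ji) nonzero; and rank less than 4 forces the two vectors of every block to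
  be parallel. Parallel pairs of vectors in [-N, N]^2 are multiples s v, t v of one vector v with
  |s|, |t| at most N / |v|, and summing N^2 / |v|^2 over v gives O(N^2 log N) of them.\<close>

lemma null_vectors_determined_by_coordinates:
  fixes M :: "real^'n^'m"
  obtains J where "card J \<le> CARD('n) - rank M"
    and "\<And>z. M *v z = 0 \<Longrightarrow> (\<forall>j\<in>J. z $ j = 0) \<Longrightarrow> z = 0"
proof -
  obtain R where R: "R \<subseteq> rows M" "independent R" "rows M \<subseteq> span R" "card R = rank M"
    using basis_exists[of "rows M"] by (auto simp: row_rank_def)
  define E where "E = range (\<lambda>j::'n. axis j (1::real))"
  have "E = Basis" unfolding E_def Basis_vec_def by auto
  then have span_E: "span E = UNIV" by (simp add: span_Basis)
  \<comment> \<open>Extend a basis of the row space by unit vectors; the indices of the added ones form J.\<close>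
  obtain B where B: "R \<subseteq> B" "B \<subseteq> R \<union> E" "independent B" "R \<union> E \<subseteq> span B"
    using maximal_independent_subset_extend[of R "R \<union> E"] R(2) by blast
  have "finite B" using B(3) finiteI_independent by blast
  have span_B: "span B = UNIV"
    using B(4) span_E by (metis span_mono span_span sup.boundedE top.extremum_uniqueI)
  then have "card B = CARD('n)"
    using basis_card_eq_dim[of B UNIV] B(3) by simp
  define J where "J = {j. axis j (1::real) \<in> B - R}"
  have "card J \<le> card (B - R)"
    by (rule card_inj_on_le[of "\<lambda>j. axis j 1"])
      (auto simp: J_def inj_on_def axis_eq_axis \<open>finite B\<close>)
  also have "card (B - R) = CARD('n) - rank M"
    using card_Diff_subset[of R B] B(1) R(4) \<open>finite B\<close> \<open>card B = CARD('n)\<close>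
    by (metis finite_subset)
  finally have "card J \<le> CARD('n) - rank M" .
  moreover have "z = 0" if null: "M *v z = 0" and J: "\<forall>j\<in>J. z $ j = 0" for z
  proof -
    have "orthogonal z b" if "b \<in> B" for b
    proof (cases "b \<in> R")
      case True
      then obtain i where "b = M $ i"
        using R(1) by (auto simp: rows_def row_def vec_lambda_eta)
      moreover have "(M *v z) $ i = 0" using null by simp
      ultimately show ?thesis
        by (simp add: orthogonal_def inner_commute matrix_vector_mul_component)
    next
      case False
      then obtain j where "b = axis j 1" "j \<in> J"
        using \<open>b \<in> B\<close> B(2) by (auto simp: E_def J_def)
      then show ?thesis
        using J by (simp add: orthogonal_def inner_axis)
    qed
    then have "orthogonal z z"
      using orthogonal_to_span[of z B z] span_B by auto
    then show ?thesis by (simp add: orthogonal_def)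
  qed
  ultimately show thesis by (rule that)
qed

lemma card_le_if_differences_in_null_space:
  fixes M :: "real^'n^'m" and X :: "(int^'n) set"
  assumes bounded: "\<And>x j. x \<in> X \<Longrightarrow> \<bar>x $ j\<bar> \<le> K"
    and null: "\<And>x y. x \<in> X \<Longrightarrow> y \<in> X \<Longrightarrow> M *v (\<chi> j. real_of_int (x $ j - y $ j)) = 0"
  shows "card X \<le> nat (2 * K + 1) ^ (CARD('n) - rank M)"
proof (cases "X = {}")
  case False
  then have "K \<ge> 0" using bounded by fastforce
  obtain J where J: "card J \<le> CARD('n) - rank M"
    and null_zero: "\<And>z. M *v z = 0 \<Longrightarrow> (\<forall>j\<in>J. z $ j = 0) \<Longrightarrow> z = 0"
    using null_vectors_determined_by_coordinates[of M] by blast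
  define restr where "restr x = restrict (\<lambda>j. x $ j) J" for x :: "int^'n"
  have "inj_on restr X"
  proof (rule inj_onI)
    fix x y assume "x \<in> X" "y \<in> X" and eq: "restr x = restr y"
    have "x $ j = y $ j" if "j \<in> J" for j
      using fun_cong[OF eq, of j] that by (simp add: restr_def)
    then have "(\<chi> j. real_of_int (x $ j - y $ j)) = 0"
      using null[OF \<open>x \<in> X\<close> \<open>y \<in> X\<close>] null_zero by simp
    then show "x = y" by (simp add: vec_eq_iff)
  qed
  moreover have "restr ` X \<subseteq> PiE J (\<lambda>_. {-K..K})"
    using bounded by (force simp: restr_def abs_le_iff)
  ultimately have "card X \<le> card (PiE J (\<lambda>_. {-K..K}))"
    by (intro card_inj_on_le) (auto simp: finite_PiE)
  also have "\<dots> = nat (2 * K + 1) ^ card J"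
    using \<open>K \<ge> 0\<close> by (simp add: card_PiE)
  also have "\<dots> \<le> nat (2 * K + 1) ^ (CARD('n) - rank M)"
    using J \<open>K \<ge> 0\<close> by (intro power_increasing) auto
  finally show ?thesis .
qed simp

lemma two_le_rank_of_entries:
  fixes M :: "real^'n^'m"
  assumes "M $ i $ k = 0" "M $ j $ k \<noteq> 0" "M $ i $ l \<noteq> 0"
  shows "2 \<le> rank M"
proof -
  have "M $ j \<notin> span {M $ i}"
    using assms by (auto simp: span_singleton)
  then have "independent {M $ j, M $ i}"
    using assms by (auto simp: independent_insert)
  moreover have "{M $ j, M $ i} \<subseteq> rows M"
    by (auto simp: rows_def row_def vec_lambda_eta)
  ultimately have "card {M $ j, M $ i} \<le> rank M"
    by (simp add: row_rank_def independent_card_le_dim)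
  moreover have "M $ j \<noteq> M $ i" using assms by auto
  ultimately show ?thesis by simp
qed

lemma homogeneous_2x2_trivial:
  fixes a b c d x y :: real
  assumes "a * d \<noteq> b * c" "a * x + b * y = 0" "c * x + d * y = 0"
  shows "x = 0 \<and> y = 0"
proof -
  have "(a * d - b * c) * x = d * (a * x + b * y) - b * (c * x + d * y)"
    "(a * d - b * c) * y = a * (c * x + d * y) - c * (a * x + b * y)"
    by (simp_all add: algebra_simps)
  then have "(a * d - b * c) * x = 0" "(a * d - b * c) * y = 0"
    using assms(2,3) by simp_all
  then show ?thesis using assms(1) by simp
qed

lemma card_le_card_image_mult:
  assumes "finite (f ` S)" and "\<And>y. y \<in> f ` S \<Longrightarrow> card {x \<in> S. f x = y} \<le> K"
  shows "card S \<le> card (f ` S) * K"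
proof -
  have "S = (\<Union>y\<in>f ` S. {x \<in> S. f x = y})" by auto
  then have "card S \<le> (\<Sum>y\<in>f ` S. card {x \<in> S. f x = y})"
    by (metis card_UN_le[OF assms(1)])
  also have "\<dots> \<le> card (f ` S) * K"
    using sum_bounded_above[OF assms(2)] by simp
  finally show ?thesis .
qed

section \<open>Parallel pairs of integer vectors\<close>

definition int_box :: "int \<Rightarrow> (int \<times> int) set" where
  "int_box N = {-N..N} \<times> {-N..N}"

definition max_norm :: "int \<times> int \<Rightarrow> int" where
  "max_norm v = max \<bar>fst v\<bar> \<bar>snd v\<bar>"

lemma finite_int_box [simp]: "finite (int_box N)"
  by (simp add: int_box_def)

lemma card_int_box: "N \<ge> 0 \<Longrightarrow> card (int_box N) = nat (2 * N + 1) ^ 2"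
  by (simp add: int_box_def card_cartesian_product power2_eq_square)

lemma max_norm_mult: "max_norm (s * a, s * b) = \<bar>s\<bar> * max_norm (a, b)"
  by (simp add: max_norm_def abs_mult max_mult_distrib_left)

lemma mem_int_box_iff: "v \<in> int_box N \<longleftrightarrow> max_norm v \<le> N"
  by (cases v) (auto simp: int_box_def max_norm_def)

lemma max_norm_pos: "v \<noteq> (0, 0) \<Longrightarrow> max_norm v > 0"
  by (cases v) (auto simp: max_norm_def)

lemma int_le_div_iff_mult_le: "(q::int) > 0 \<Longrightarrow> m \<le> n div q \<longleftrightarrow> m * q \<le> n"
  by (smt (verit) minus_div_mult_eq_mod nonzero_mult_div_cancel_right pos_mod_sign zdiv_mono1)

lemma parallel_int_vectors_multiples:
  fixes a b c d :: int
  assumes "(a, b) \<noteq> (0, 0)" "a * d = b * c" "(a, b) \<in> int_box N" "(c, d) \<in> int_box N"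
  obtains v s t where "v \<in> int_box N - {(0, 0)}" "\<bar>s\<bar> \<le> N div max_norm v" "\<bar>t\<bar> \<le> N div max_norm v"
    "(a, b) = (s * fst v, s * snd v)" "(c, d) = (t * fst v, t * snd v)"
proof -
  define g where "g = gcd a b"
  define v where "v = (a div g, b div g)"
  have "g > 0" using assms(1) by (auto simp: g_def)
  have ab: "(a, b) = (g * fst v, g * snd v)" by (simp add: v_def g_def)
  have "coprime (fst v) (snd v)"
    using assms(1) div_gcd_coprime by (auto simp: v_def g_def)
  then obtain x y where xy: "x * fst v + y * snd v = 1"
    by (metis bezout_int coprime_iff_gcd_eq_1)
  have "fst v * d = snd v * c"
    using assms(2) \<open>g > 0\<close> ab by (simp add: mult.assoc)
  define t where "t = c * x + d * y"
  have cd: "(c, d) = (t * fst v, t * snd v)"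
  proof -
    have "t * fst v = c * (x * fst v + y * snd v)" "t * snd v = d * (x * fst v + y * snd v)"
      using \<open>fst v * d = snd v * c\<close> by (simp_all add: t_def algebra_simps)
    then show ?thesis using xy by simp
  qed
  have "v \<noteq> (0, 0)" using assms(1) ab by auto
  then have "max_norm v > 0" by (rule max_norm_pos)
  have coeff_bound: "\<bar>s\<bar> \<le> N div max_norm v" if "(s * fst v, s * snd v) \<in> int_box N" for s
    using that \<open>max_norm v > 0\<close>
    by (simp add: int_le_div_iff_mult_le mem_int_box_iff max_norm_mult[of s "fst v" "snd v"])
  have "max_norm v \<le> g * max_norm v"
    using \<open>g > 0\<close> \<open>max_norm v > 0\<close> by simp
  also have "\<dots> = max_norm (a, b)"
    using ab \<open>g > 0\<close> max_norm_mult[of g "fst v" "snd v"] by simp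
  also have "\<dots> \<le> N"
    using assms(3) by (simp add: mem_int_box_iff)
  finally have "v \<in> int_box N" by (simp add: mem_int_box_iff)
  then show thesis
    using that[of v g t] coeff_bound[of g] coeff_bound[of t] assms(3,4) ab cd \<open>v \<noteq> (0, 0)\<close>
    by auto
qed

lemma sum_inverse_square_max_norm:
  "(\<Sum>v\<in>int_box (int n) - {(0, 0)}. 1 / real_of_int (max_norm v) ^ 2) = 8 * harm n"
proof (induction n)
  case 0
  have "int_box (int 0) - {(0, 0)} = {}" by (auto simp: int_box_def)
  then show ?case by (simp only:) (simp add: harm_def)
next
  case (Suc n)
  define shell where "shell = int_box (int (Suc n)) - int_box (int n)"
  have sub: "int_box (int n) \<subseteq> int_box (int (Suc n))" by (auto simp: int_box_def)
  have "max_norm v = int n + 1" if "v \<in> shell" for v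
    using that by (simp add: shell_def mem_int_box_iff)
  then have shell_sum:
    "(\<Sum>v\<in>shell. 1 / real_of_int (max_norm v) ^ 2) = card shell / (real n + 1) ^ 2"
    by simp
  have "card shell = (2 * n + 3) ^ 2 - (2 * n + 1) ^ 2"
    using sub by (simp add: shell_def card_Diff_subset card_int_box nat_add_distrib nat_mult_distrib
        add.commute)
  also have "\<dots> = 8 * (n + 1)" by (simp add: power2_eq_square algebra_simps)
  finally have card_shell: "real (card shell) / (real n + 1) ^ 2 = 8 / (real n + 1)"
    by (simp add: power2_eq_square divide_simps)
  have "int_box (int (Suc n)) - {(0, 0)} = (int_box (int n) - {(0, 0)}) \<union> shell"
    using sub by (auto simp: shell_def int_box_def)
  then have "(\<Sum>v\<in>int_box (int (Suc n)) - {(0, 0)}. 1 / real_of_int (max_norm v) ^ 2)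
      = (\<Sum>v\<in>int_box (int n) - {(0, 0)}. 1 / real_of_int (max_norm v) ^ 2)
        + (\<Sum>v\<in>shell. 1 / real_of_int (max_norm v) ^ 2)"
    by (simp only:) (rule sum.union_disjoint, auto simp: shell_def)
  also have "\<dots> = 8 * harm n + 8 / (real n + 1)"
    by (simp only: Suc.IH shell_sum card_shell)
  also have "\<dots> = 8 * harm (Suc n)"
    by (simp add: harm_Suc algebra_simps divide_inverse)
  finally show ?case .
qed

lemma harm_le_1_plus_ln: "n \<ge> 1 \<Longrightarrow> harm n \<le> 1 + ln (real n)"
  using decseq_harm_diff_ln[unfolded decseq_def, rule_format, of 0 "n - 1"]
  by (simp add: harm_def)

definition parallel_pairs :: "int \<Rightarrow> ((int \<times> int) \<times> (int \<times> int)) set" where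
  "parallel_pairs N = {(p, q) \<in> int_box N \<times> int_box N. fst p * snd q = snd p * fst q}"

lemma finite_parallel_pairs [simp]: "finite (parallel_pairs N)"
  by (rule finite_subset[of _ "int_box N \<times> int_box N"]) (auto simp: parallel_pairs_def)

definition pair_of_line_coordinates :: "(int \<times> int) \<times> int \<times> int \<Rightarrow> (int \<times> int) \<times> (int \<times> int)" where
  "pair_of_line_coordinates = (\<lambda>(v, s, t). ((s * fst v, s * snd v), (t * fst v, t * snd v)))"

definition line_coordinates :: "int \<Rightarrow> ((int \<times> int) \<times> int \<times> int) set" where
  "line_coordinates N = (SIGMA v:int_box N - {(0, 0)}.
     {- (N div max_norm v)..N div max_norm v} \<times> {- (N div max_norm v)..N div max_norm v})"

lemma parallel_pairs_subset:
  "parallel_pairs N \<subseteq> {(0, 0)} \<times> int_box N \<union> int_box N \<times> {(0, 0)} \<union>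
     pair_of_line_coordinates ` line_coordinates N"
proof
  fix pq assume "pq \<in> parallel_pairs N"
  then obtain a b c d where pq: "pq = ((a, b), (c, d))"
    and "(a, b) \<in> int_box N" "(c, d) \<in> int_box N" "a * d = b * c"
    by (auto simp: parallel_pairs_def)
  show "pq \<in> {(0, 0)} \<times> int_box N \<union> int_box N \<times> {(0, 0)} \<union>
     pair_of_line_coordinates ` line_coordinates N"
  proof (cases "(a, b) = (0, 0) \<or> (c, d) = (0, 0)")
    case False
    then obtain v s t where "v \<in> int_box N - {(0, 0)}" "\<bar>s\<bar> \<le> N div max_norm v"
      "\<bar>t\<bar> \<le> N div max_norm v" "(a, b) = (s * fst v, s * snd v)" "(c, d) = (t * fst v, t * snd v)"
      using parallel_int_vectors_multiples \<open>a * d = b * c\<close> \<open>(a, b) \<in> int_box N\<close> \<open>(c, d) \<in> int_box N\<close>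
      by blast
    then show ?thesis
      unfolding pq by (force simp: line_coordinates_def pair_of_line_coordinates_def abs_le_iff)
  qed (use pq \<open>(a, b) \<in> int_box N\<close> \<open>(c, d) \<in> int_box N\<close> in auto)
qed

lemma card_line_coordinates_le:
  assumes "N \<ge> 1"
  shows "real (card (line_coordinates N)) \<le> 72 * real_of_int N ^ 2 * harm (nat N)"
proof -
  define K where "K v = N div max_norm v" for v
  have term_le: "real (card ({- K v..K v} \<times> {- K v..K v}))
      \<le> 9 * real_of_int N ^ 2 * (1 / real_of_int (max_norm v) ^ 2)"
    if "v \<in> int_box N - {(0, 0)}" for v
  proof -
    have pos: "max_norm v > 0" using that max_norm_pos by blast
    then have "K v \<ge> 1" "K v * max_norm v \<le> N"
      using that int_le_div_iff_mult_le[OF pos, of "K v" N]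
      by (simp_all add: K_def int_le_div_iff_mult_le mem_int_box_iff)
    then have "real_of_int (K v) \<le> real_of_int N / real_of_int (max_norm v)"
      using pos by (simp add: field_simps flip: of_int_mult)
    have "real (card ({- K v..K v} \<times> {- K v..K v})) = (2 * real_of_int (K v) + 1) ^ 2"
      using \<open>K v \<ge> 1\<close> by (simp add: card_cartesian_product power2_eq_square)
    also have "\<dots> \<le> (3 * (real_of_int N / real_of_int (max_norm v))) ^ 2"
      using \<open>K v \<ge> 1\<close> \<open>real_of_int (K v) \<le> _\<close> by (intro power_mono) auto
    also have "\<dots> = 9 * real_of_int N ^ 2 * (1 / real_of_int (max_norm v) ^ 2)"
      by (simp add: power_divide power_mult_distrib)
    finally show ?thesis .
  qed
  have "real (card (line_coordinates N))
      = (\<Sum>v\<in>int_box N - {(0, 0)}. real (card ({- K v..K v} \<times> {- K v..K v})))"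
    unfolding line_coordinates_def K_def by (subst card_SigmaI) auto
  also have "\<dots> \<le> (\<Sum>v\<in>int_box N - {(0, 0)}.
      9 * real_of_int N ^ 2 * (1 / real_of_int (max_norm v) ^ 2))"
    by (rule sum_mono) (rule term_le)
  also have "\<dots> = 9 * real_of_int N ^ 2
      * (\<Sum>v\<in>int_box N - {(0, 0)}. 1 / real_of_int (max_norm v) ^ 2)"
    by (rule sum_distrib_left[symmetric])
  also have "\<dots> = 72 * real_of_int N ^ 2 * harm (nat N)"
    using sum_inverse_square_max_norm[of "nat N"] assms by simp
  finally show ?thesis .
qed

lemma ln_ge_two_thirds:
  assumes "N \<ge> 2"
  shows "2 / 3 \<le> ln (real_of_int N)"
proof -
  have "ln 2 \<le> ln (real_of_int N)" using assms by simp
  then show ?thesis using ln2_ge_two_thirds by linarith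
qed

lemma card_parallel_pairs_le:
  assumes "N \<ge> 2"
  shows "real (card (parallel_pairs N)) \<le> 207 * real_of_int N ^ 2 * ln (real_of_int N)"
proof -
  define n where "n = real_of_int N"
  have "finite (line_coordinates N)" by (auto simp: line_coordinates_def)
  then have "card (parallel_pairs N)
      \<le> card ({(0, 0)} \<times> int_box N \<union> int_box N \<times> {(0, 0)}
          \<union> pair_of_line_coordinates ` line_coordinates N)"
    using parallel_pairs_subset[of N] by (intro card_mono) auto
  also have "\<dots> \<le> card ({(0::int, 0::int)} \<times> int_box N) + card (int_box N \<times> {(0::int, 0::int)})
      + card (pair_of_line_coordinates ` line_coordinates N)"
    by (intro order_trans[OF card_Un_le] add_mono) simp_all
  also have "\<dots> \<le> card ({(0::int, 0::int)} \<times> int_box N) + card (int_box N \<times> {(0::int, 0::int)})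
      + card (line_coordinates N)"
    using \<open>finite (line_coordinates N)\<close> by (intro add_mono card_image_le) simp_all
  also have "\<dots> = 2 * nat (2 * N + 1) ^ 2 + card (line_coordinates N)"
    using assms by (simp add: card_cartesian_product card_int_box)
  finally have "real (card (parallel_pairs N))
      \<le> real (2 * nat (2 * N + 1) ^ 2 + card (line_coordinates N))"
    by (rule of_nat_mono)
  moreover have "real (nat (2 * N + 1)) = 2 * n + 1" using assms by (simp add: n_def)
  ultimately have "real (card (parallel_pairs N))
      \<le> 2 * (2 * n + 1) ^ 2 + real (card (line_coordinates N))"
    by simp
  moreover have "real (card (line_coordinates N)) \<le> 72 * n ^ 2 * (1 + ln n)"
  proof -
    have "harm (nat N) \<le> 1 + ln n"
      using harm_le_1_plus_ln[of "nat N"] assms by (simp add: n_def)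
    then have "72 * n ^ 2 * harm (nat N) \<le> 72 * n ^ 2 * (1 + ln n)"
      by (intro mult_left_mono) simp_all
    moreover have "real (card (line_coordinates N)) \<le> 72 * n ^ 2 * harm (nat N)"
      using card_line_coordinates_le[of N] assms by (simp add: n_def)
    ultimately show ?thesis by linarith
  qed
  moreover have "(2 * n + 1) ^ 2 \<le> 9 * n ^ 2"
    using power_mono[of "2 * n + 1" "3 * n" 2] assms by (simp add: n_def power_mult_distrib)
  moreover have "1 \<le> 3 / 2 * ln n"
    using ln_ge_two_thirds[OF assms] by (simp add: n_def)
  then have "n ^ 2 \<le> n ^ 2 * (3 / 2 * ln n)"
    using mult_left_mono[of 1 "3 / 2 * ln n" "n ^ 2"] by simp
  ultimately show ?thesis
    unfolding n_def by (simp add: algebra_simps)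
qed

lemma exhaust_6:
  fixes x :: 6
  shows "x = 1 \<or> x = 2 \<or> x = 3 \<or> x = 4 \<or> x = 5 \<or> x = 6"
proof (induct x)
  case (of_int z)
  then have "z = 0 \<or> z = 1 \<or> z = 2 \<or> z = 3 \<or> z = 4 \<or> z = 5" by fastforce
  then show ?case by auto
qed

lemma forall_6: "(\<forall>i::6. P i) \<longleftrightarrow> P 1 \<and> P 2 \<and> P 3 \<and> P 4 \<and> P 5 \<and> P 6"
  by (metis exhaust_6)

lemma Mmat_component [simp]:
  "Mmat A B $ 1 $ 1 = - real_of_int (B$1$2)" "Mmat A B $ 1 $ 2 = real_of_int (A$1$2)"
  "Mmat A B $ 1 $ 3 = 0" "Mmat A B $ 1 $ 4 = 0"
  "Mmat A B $ 2 $ 1 = real_of_int (B$2$1)" "Mmat A B $ 2 $ 2 = - real_of_int (A$2$1)"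
  "Mmat A B $ 2 $ 3 = 0" "Mmat A B $ 2 $ 4 = 0"
  "Mmat A B $ 3 $ 1 = 0" "Mmat A B $ 3 $ 2 = 0"
  "Mmat A B $ 3 $ 3 = - real_of_int (B$1$3)" "Mmat A B $ 3 $ 4 = real_of_int (A$1$3)"
  "Mmat A B $ 4 $ 1 = 0" "Mmat A B $ 4 $ 2 = 0"
  "Mmat A B $ 4 $ 3 = real_of_int (B$3$1)" "Mmat A B $ 4 $ 4 = - real_of_int (A$3$1)"
  "Mmat A B $ 5 $ 1 = real_of_int (B$3$2)" "Mmat A B $ 5 $ 2 = - real_of_int (A$3$2)"
  "Mmat A B $ 5 $ 3 = - real_of_int (B$3$2)" "Mmat A B $ 5 $ 4 = real_of_int (A$3$2)"
  "Mmat A B $ 6 $ 1 = - real_of_int (B$2$3)" "Mmat A B $ 6 $ 2 = real_of_int (A$2$3)"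
  "Mmat A B $ 6 $ 3 = real_of_int (B$2$3)" "Mmat A B $ 6 $ 4 = - real_of_int (A$2$3)"
  by (simp_all add: Mmat_def vector_def)

lemma Mmat_mult_vec_component:
  "(Mmat A B *v z) $ 1 = - real_of_int (B$1$2) * z$1 + real_of_int (A$1$2) * z$2"
  "(Mmat A B *v z) $ 2 = real_of_int (B$2$1) * z$1 - real_of_int (A$2$1) * z$2"
  "(Mmat A B *v z) $ 3 = - real_of_int (B$1$3) * z$3 + real_of_int (A$1$3) * z$4"
  "(Mmat A B *v z) $ 4 = real_of_int (B$3$1) * z$3 - real_of_int (A$3$1) * z$4"
  "(Mmat A B *v z) $ 5 = real_of_int (B$3$2) * (z$1 - z$3) - real_of_int (A$3$2) * (z$2 - z$4)"
  "(Mmat A B *v z) $ 6 = - real_of_int (B$2$3) * (z$1 - z$3) + real_of_int (A$2$3) * (z$2 - z$4)"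
  by (simp_all add: matrix_vector_mult_def sum_4 algebra_simps)

lemma commute_entry_real:
  fixes A B :: "int^3^3"
  assumes "A ** B = B ** A"
  shows "real_of_int (A$i$1) * real_of_int (B$1$j) + real_of_int (A$i$2) * real_of_int (B$2$j)
      + real_of_int (A$i$3) * real_of_int (B$3$j)
    = real_of_int (B$i$1) * real_of_int (A$1$j) + real_of_int (B$i$2) * real_of_int (A$2$j)
      + real_of_int (B$i$3) * real_of_int (A$3$j)"
proof -
  have "real_of_int ((A ** B) $ i $ j) = real_of_int ((B ** A) $ i $ j)" using assms by simp
  then show ?thesis by (simp add: matrix_matrix_mult_def sum_3)
qed

definition diag_diffs :: "(int^3^3) \<times> (int^3^3) \<Rightarrow> int^4" where
  "diag_diffs = (\<lambda>(A, B). vector [A$1$1 - A$2$2, B$1$1 - B$2$2, A$1$1 - A$3$3, B$1$1 - B$3$3])"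

definition offdiag_products :: "(int^3^3) \<times> (int^3^3) \<Rightarrow> int^6" where
  "offdiag_products = (\<lambda>(A, B). vector
     [A$1$3 * B$3$2 - B$1$3 * A$3$2, A$2$3 * B$3$1 - B$2$3 * A$3$1,
      A$1$2 * B$2$3 - B$1$2 * A$2$3, A$3$2 * B$2$1 - B$3$2 * A$2$1,
      B$3$1 * A$1$2 - A$3$1 * B$1$2, B$2$1 * A$1$3 - A$2$1 * B$1$3])"

lemma Mmat_mult_diag_diffs:
  assumes "A ** B = B ** A"
  shows "Mmat A B *v (\<chi> j. real_of_int (diag_diffs (A, B) $ j))
    = (\<chi> i. real_of_int (offdiag_products (A, B) $ i))"
  using commute_entry_real[OF assms, of 1 2] commute_entry_real[OF assms, of 2 1]
    commute_entry_real[OF assms, of 1 3] commute_entry_real[OF assms, of 3 1]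
    commute_entry_real[OF assms, of 2 3] commute_entry_real[OF assms, of 3 2]
  by (simp add: vec_eq_iff forall_6 Mmat_mult_vec_component diag_diffs_def offdiag_products_def
      vector_def algebra_simps)

section \<open>Fibres of the off-diagonal key\<close>

type_synonym block = "(int \<times> int) \<times> (int \<times> int)"

abbreviation zero_block :: block where
  "zero_block \<equiv> ((0, 0), (0, 0))"

definition offdiag_pair :: "int^3^3 \<Rightarrow> int^3^3 \<Rightarrow> 3 \<Rightarrow> 3 \<Rightarrow> block" where
  "offdiag_pair A B i j = ((A$i$j, B$i$j), (A$j$i, B$j$i))"

text \<open>The key also records (a9, b9), so that together with the diagonal differences it
  determines (A, B).\<close>

definition offdiag_key :: "(int^3^3) \<times> (int^3^3) \<Rightarrow> block \<times> block \<times> block \<times> (int \<times> int)" where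
  "offdiag_key = (\<lambda>(A, B).
     (offdiag_pair A B 1 2, offdiag_pair A B 1 3, offdiag_pair A B 2 3, (A$3$3, B$3$3)))"

lemma Mmat_eq_if_offdiag_key_eq:
  "offdiag_key (A, B) = offdiag_key (A', B') \<Longrightarrow> Mmat A B = Mmat A' B'"
  by (simp add: offdiag_key_def offdiag_pair_def Mmat_def)

lemma offdiag_products_eq_if_offdiag_key_eq:
  "offdiag_key x = offdiag_key y \<Longrightarrow> offdiag_products x = offdiag_products y"
  by (cases x; cases y) (simp add: offdiag_key_def offdiag_pair_def offdiag_products_def)

lemma offdiag_key_diag_diffs_inj:
  assumes "offdiag_key x = offdiag_key y" "diag_diffs x = diag_diffs y"
  shows "x = y"
proof -
  obtain A B A' B' where xy: "x = (A, B)" "y = (A', B')" by (cases x, cases y)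
  have off: "A$1$2 = A'$1$2" "B$1$2 = B'$1$2" "A$2$1 = A'$2$1" "B$2$1 = B'$2$1"
    "A$1$3 = A'$1$3" "B$1$3 = B'$1$3" "A$3$1 = A'$3$1" "B$3$1 = B'$3$1"
    "A$2$3 = A'$2$3" "B$2$3 = B'$2$3" "A$3$2 = A'$3$2" "B$3$2 = B'$3$2"
    "A$3$3 = A'$3$3" "B$3$3 = B'$3$3"
    using assms(1) by (simp_all add: xy offdiag_key_def offdiag_pair_def)
  moreover have "A$1$1 - A$2$2 = A'$1$1 - A'$2$2" "B$1$1 - B$2$2 = B'$1$1 - B'$2$2"
    "A$1$1 - A$3$3 = A'$1$1 - A'$3$3" "B$1$1 - B$3$3 = B'$1$1 - B'$3$3"
    using assms(2) by (simp_all add: xy diag_diffs_def vec_eq_iff forall_4 vector_def)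
  ultimately have "A$1$1 = A'$1$1" "A$2$2 = A'$2$2" "B$1$1 = B'$1$1" "B$2$2 = B'$2$2"
    by linarith+
  with off have "A = A'" "B = B'"
    by (simp_all add: vec_eq_iff forall_3)
  then show ?thesis using xy by simp
qed

lemma abs_diag_diffs_le:
  assumes "\<forall>i j. \<bar>A $ i $ j\<bar> \<le> N \<and> \<bar>B $ i $ j\<bar> \<le> N"
  shows "\<bar>diag_diffs (A, B) $ j\<bar> \<le> 2 * N"
proof -
  have "\<bar>A $ i $ i - A $ k $ k\<bar> \<le> 2 * N" "\<bar>B $ i $ i - B $ k $ k\<bar> \<le> 2 * N" for i k
    using assms[rule_format, of i i] assms[rule_format, of k k] by linarith+
  then show ?thesis
    using exhaust_4[of j] by (auto simp: diag_diffs_def vector_def)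
qed

lemma card_fiber_offdiag_key_le:
  assumes "N \<ge> 0"
  shows "card {x \<in> S_set N r. offdiag_key x = k} \<le> nat (4 * N + 1) ^ (4 - r)"
proof (cases "{x \<in> S_set N r. offdiag_key x = k} = {}")
  case False
  define F where "F = {x \<in> S_set N r. offdiag_key x = k}"
  obtain A0 B0 where "(A0, B0) \<in> F" using False by (auto simp: F_def)
  define M where "M = Mmat A0 B0"
  have "rank M = r" using \<open>(A0, B0) \<in> F\<close> by (simp add: F_def S_set_def M_def)
  have products:
    "M *v (\<chi> j. real_of_int (diag_diffs x $ j)) = (\<chi> i. real_of_int (offdiag_products x $ i))"
    if "x \<in> F" for x
  proof (cases x)
    case (Pair A B)
    then have key: "offdiag_key (A, B) = offdiag_key (A0, B0)" and comm: "A ** B = B ** A"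
      using that \<open>(A0, B0) \<in> F\<close> by (auto simp: F_def S_set_def)
    then show ?thesis
      using Mmat_mult_diag_diffs[OF comm] Mmat_eq_if_offdiag_key_eq[OF key] Pair
      by (simp add: M_def)
  qed
  have "inj_on diag_diffs F"
    by (rule inj_onI, rule offdiag_key_diag_diffs_inj) (auto simp: F_def)
  then have "card F = card (diag_diffs ` F)" by (rule card_image[symmetric])
  also have "\<dots> \<le> nat (2 * (2 * N) + 1) ^ (CARD(4) - rank M)"
  proof (rule card_le_if_differences_in_null_space)
    show "\<bar>d $ j\<bar> \<le> 2 * N" if d: "d \<in> diag_diffs ` F" for d j
    proof -
      obtain A B where "(A, B) \<in> S_set N r" "d = diag_diffs (A, B)"
        using d by (auto simp: F_def)
      then show ?thesis using abs_diag_diffs_le by (simp add: S_set_def)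
    qed
    fix d d' assume "d \<in> diag_diffs ` F" "d' \<in> diag_diffs ` F"
    then obtain x x' where "x \<in> F" "x' \<in> F" "d = diag_diffs x" "d' = diag_diffs x'" by blast
    moreover have "offdiag_products x = offdiag_products x'"
      using \<open>x \<in> F\<close> \<open>x' \<in> F\<close> by (intro offdiag_products_eq_if_offdiag_key_eq) (simp add: F_def)
    moreover have "(\<chi> j. real_of_int (d $ j - d' $ j))
        = (\<chi> j. real_of_int (d $ j)) - (\<chi> j. real_of_int (d' $ j))"
      by (simp add: vec_eq_iff)
    ultimately show "M *v (\<chi> j. real_of_int (d $ j - d' $ j)) = 0"
      by (simp add: matrix_vector_mult_diff_distrib products)
  qed
  finally show ?thesis by (simp add: F_def \<open>rank M = r\<close>)
next
  case True
  then show ?thesis by (simp only: card.empty zero_le)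
qed

lemma card_S_set_le:
  assumes "N \<ge> 0" "offdiag_key ` S_set N r \<subseteq> K" "finite K"
  shows "card (S_set N r) \<le> card K * nat (4 * N + 1) ^ (4 - r)"
proof -
  have "card (S_set N r) \<le> card (offdiag_key ` S_set N r) * nat (4 * N + 1) ^ (4 - r)"
    using assms
    by (intro card_le_card_image_mult card_fiber_offdiag_key_le) (auto intro: finite_subset)
  also have "\<dots> \<le> card K * nat (4 * N + 1) ^ (4 - r)"
    using assms by (intro mult_right_mono card_mono) auto
  finally show ?thesis .
qed

section \<open>Keys of matrices of low rank\<close>

lemma offdiag_pairs_parallel_if_rank_ne_4:
  fixes A B :: "int^3^3"
  assumes comm: "A ** B = B ** A" and rank: "rank (Mmat A B) \<noteq> 4"
  shows "A$1$2 * B$2$1 = B$1$2 * A$2$1" "A$1$3 * B$3$1 = B$1$3 * A$3$1"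
    "A$2$3 * B$3$2 = B$2$3 * A$3$2"
proof -
  define a b where "a i j = real_of_int (A$i$j)" and "b i j = real_of_int (B$i$j)" for i j
  define c12 c13 c23 where "c12 = a 1 2 * b 2 1 - b 1 2 * a 2 1"
    and "c13 = a 1 3 * b 3 1 - b 1 3 * a 3 1" and "c23 = a 2 3 * b 3 2 - b 2 3 * a 3 2"
  have "c12 + c13 = 0" "c23 = c12"
    using commute_entry_real[OF comm, of 1 1] commute_entry_real[OF comm, of 2 2]
    by (simp_all add: a_def b_def c12_def c13_def c23_def algebra_simps)
  have "c12 = 0"
  proof (rule ccontr)
    assume "c12 \<noteq> 0"
    then have "c13 \<noteq> 0" using \<open>c12 + c13 = 0\<close> by simp
    have "z = 0" if "Mmat A B *v z = 0" for z
    proof -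
      have "(Mmat A B *v z) $ i = 0" for i using that by simp
      then have rows: "- b 1 2 * z$1 + a 1 2 * z$2 = 0" "b 2 1 * z$1 + - a 2 1 * z$2 = 0"
        "- b 1 3 * z$3 + a 1 3 * z$4 = 0" "b 3 1 * z$3 + - a 3 1 * z$4 = 0"
        by (metis Mmat_mult_vec_component a_def b_def diff_conv_add_uminus mult_minus_left)+
      have dets: "- b 1 2 * - a 2 1 \<noteq> a 1 2 * b 2 1" "- b 1 3 * - a 3 1 \<noteq> a 1 3 * b 3 1"
        using \<open>c12 \<noteq> 0\<close> \<open>c13 \<noteq> 0\<close> by (simp_all add: c12_def c13_def mult.commute)
      have "z$1 = 0 \<and> z$2 = 0" "z$3 = 0 \<and> z$4 = 0"
        using homogeneous_2x2_trivial[OF dets(1) rows(1,2)]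
          homogeneous_2x2_trivial[OF dets(2) rows(3,4)]
        by simp_all
      then show ?thesis by (simp add: vec_eq_iff forall_4)
    qed
    then have "inj ((*v) (Mmat A B))"
      by (metis matrix_left_invertible_injective matrix_left_invertible_ker)
    then have "rank (Mmat A B) = 4"
      using full_rank_injective[of "Mmat A B"] by simp
    with rank show False ..
  qed
  then have "c12 = 0" "c13 = 0" "c23 = 0"
    using \<open>c12 + c13 = 0\<close> \<open>c23 = c12\<close> by simp_all
  then show "A$1$2 * B$2$1 = B$1$2 * A$2$1" "A$1$3 * B$3$1 = B$1$3 * A$3$1"
    "A$2$3 * B$3$2 = B$2$3 * A$3$2"
    by (simp_all add: a_def b_def c12_def c13_def c23_def flip: of_int_mult of_int_eq_iff)
qed

lemma offdiag_pairs_zero_if_rank_0: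
  assumes "rank (Mmat A B) = 0"
  shows "offdiag_pair A B 1 2 = zero_block" "offdiag_pair A B 1 3 = zero_block"
    "offdiag_pair A B 2 3 = zero_block"
proof -
  have "Mmat A B $ i $ k = 0" for i k
    using assms by (simp add: rank_eq_0)
  then show "offdiag_pair A B 1 2 = zero_block" "offdiag_pair A B 1 3 = zero_block"
    "offdiag_pair A B 2 3 = zero_block"
    by (metis Mmat_component neg_equal_0_iff_equal of_int_eq_0_iff offdiag_pair_def)+
qed

lemma at_most_one_offdiag_pair_nonzero:
  assumes "rank (Mmat A B) \<le> 1"
  shows "offdiag_pair A B 1 2 = zero_block \<or> offdiag_pair A B 1 3 = zero_block"
    "offdiag_pair A B 1 2 = zero_block \<or> offdiag_pair A B 2 3 = zero_block"
    "offdiag_pair A B 1 3 = zero_block \<or> offdiag_pair A B 2 3 = zero_block"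
proof -
  let ?M = "Mmat A B"
  have independent: False if "?M $ i $ k = 0" "?M $ j $ k \<noteq> 0" "?M $ i $ l \<noteq> 0" for i j k l
    using two_le_rank_of_entries[OF that] assms by simp
  have block_12: "\<exists>i\<in>{1, 2}. \<exists>l. ?M $ i $ l \<noteq> 0" if "offdiag_pair A B 1 2 \<noteq> zero_block"
    using that by (auto simp: offdiag_pair_def) (metis Mmat_component(1,2,5,6) insertCI
        neg_equal_0_iff_equal of_int_eq_0_iff)+
  have block_13: "\<exists>i\<in>{3, 4}. \<exists>l\<in>{3, 4}. ?M $ i $ l \<noteq> 0" if "offdiag_pair A B 1 3 \<noteq> zero_block"
    using that by (auto simp: offdiag_pair_def)
  have block_23: "\<exists>i\<in>{5, 6}. \<exists>l\<in>{1, 2}. \<exists>l'\<in>{3, 4}. ?M $ i $ l \<noteq> 0 \<and> ?M $ i $ l' \<noteq> 0"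
    if "offdiag_pair A B 2 3 \<noteq> zero_block"
    using that by (auto simp: offdiag_pair_def)
  have "?M $ i $ k = 0" if "i \<in> {1, 2}" "k \<in> {3, 4}" for i k
    using that by auto
  moreover have "?M $ i $ k = 0" if "i \<in> {3, 4}" "k \<in> {1, 2}" for i k
    using that by auto
  ultimately show "offdiag_pair A B 1 2 = zero_block \<or> offdiag_pair A B 1 3 = zero_block"
    "offdiag_pair A B 1 2 = zero_block \<or> offdiag_pair A B 2 3 = zero_block"
    "offdiag_pair A B 1 3 = zero_block \<or> offdiag_pair A B 2 3 = zero_block"
    using independent block_12 block_13 block_23 by metis+
qed

lemma offdiag_key_in_int_boxes:
  assumes "(A, B) \<in> S_set N r"
  shows "offdiag_pair A B i j \<in> int_box N \<times> int_box N" "(A$3$3, B$3$3) \<in> int_box N"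
proof -
  have "\<bar>A$i$j\<bar> \<le> N \<and> \<bar>B$i$j\<bar> \<le> N" for i j
    using assms by (simp add: S_set_def)
  then show "offdiag_pair A B i j \<in> int_box N \<times> int_box N" "(A$3$3, B$3$3) \<in> int_box N"
    by (simp_all add: offdiag_pair_def mem_int_box_iff max_norm_def)
qed

lemma offdiag_key_image_rank_0:
  "offdiag_key ` S_set N 0 \<subseteq> {zero_block} \<times> {zero_block} \<times> {zero_block} \<times> int_box N"
proof -
  have "offdiag_key (A, B) \<in> {zero_block} \<times> {zero_block} \<times> {zero_block} \<times> int_box N"
    if S: "(A, B) \<in> S_set N 0" for A B
  proof -
    have "rank (Mmat A B) = 0" using S by (simp add: S_set_def)
    then show ?thesis
      using offdiag_pairs_zero_if_rank_0 offdiag_key_in_int_boxes[OF S]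
      by (simp add: offdiag_key_def)
  qed
  then show ?thesis by (metis image_subsetI surj_pair)
qed

lemma offdiag_key_image_rank_1:
  "offdiag_key ` S_set N 1 \<subseteq>
     (int_box N \<times> int_box N) \<times> {zero_block} \<times> {zero_block} \<times> int_box N
     \<union> {zero_block} \<times> (int_box N \<times> int_box N) \<times> {zero_block} \<times> int_box N
     \<union> {zero_block} \<times> {zero_block} \<times> (int_box N \<times> int_box N) \<times> int_box N"
proof -
  have "offdiag_key (A, B) \<in>
     (int_box N \<times> int_box N) \<times> {zero_block} \<times> {zero_block} \<times> int_box N
     \<union> {zero_block} \<times> (int_box N \<times> int_box N) \<times> {zero_block} \<times> int_box N
     \<union> {zero_block} \<times> {zero_block} \<times> (int_box N \<times> int_box N) \<times> int_box N"
    if S: "(A, B) \<in> S_set N 1" for A B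
  proof -
    have "rank (Mmat A B) \<le> 1" using S by (simp add: S_set_def)
    note zero = at_most_one_offdiag_pair_nonzero[OF this]
    note boxes = offdiag_key_in_int_boxes[OF S]
    show ?thesis
    proof (cases "offdiag_pair A B 1 2 = zero_block")
      case False
      then show ?thesis using zero boxes by (simp add: offdiag_key_def)
    next
      case True
      then show ?thesis using zero boxes
        by (cases "offdiag_pair A B 1 3 = zero_block") (simp_all add: offdiag_key_def)
    qed
  qed
  then show ?thesis by (metis image_subsetI surj_pair)
qed

lemma offdiag_key_image_rank_3:
  "offdiag_key ` S_set N 3 \<subseteq> parallel_pairs N \<times> parallel_pairs N \<times> parallel_pairs N \<times> int_box N"
proof -
  have "offdiag_key (A, B) \<in> parallel_pairs N \<times> parallel_pairs N \<times> parallel_pairs N \<times> int_box N"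
    if S: "(A, B) \<in> S_set N 3" for A B
  proof -
    have "A ** B = B ** A" "rank (Mmat A B) \<noteq> 4" using S by (simp_all add: S_set_def)
    then show ?thesis
      using offdiag_pairs_parallel_if_rank_ne_4[of A B] offdiag_key_in_int_boxes[OF S]
      by (simp add: offdiag_key_def parallel_pairs_def offdiag_pair_def)
  qed
  then show ?thesis by (metis image_subsetI surj_pair)
qed

lemma card_S_set_0_le:
  assumes "N \<ge> 1"
  shows "real (card (S_set N 0)) \<le> 10000 * real_of_int N ^ 9"
proof -
  define n where "n = real_of_int N"
  have "n \<ge> 1" using assms by (simp add: n_def)
  have "card (S_set N 0)
      \<le> card ({zero_block} \<times> {zero_block} \<times> {zero_block} \<times> int_box N) * nat (4 * N + 1) ^ 4"
    using card_S_set_le[OF _ offdiag_key_image_rank_0] assms by simp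
  also have "\<dots> = nat (2 * N + 1) ^ 2 * nat (4 * N + 1) ^ 4"
    using assms by (simp add: card_cartesian_product card_int_box)
  finally have "real (card (S_set N 0)) \<le> real (nat (2 * N + 1) ^ 2 * nat (4 * N + 1) ^ 4)"
    by (rule of_nat_mono)
  also have "\<dots> = (2 * n + 1) ^ 2 * (4 * n + 1) ^ 4"
    using assms by (simp add: n_def)
  also have "\<dots> \<le> (3 * n) ^ 2 * (5 * n) ^ 4"
    using \<open>n \<ge> 1\<close> by (intro mult_mono power_mono) simp_all
  also have "\<dots> = 5625 * n ^ 6"
    by (simp add: power_mult_distrib flip: power_add)
  also have "\<dots> \<le> 10000 * n ^ 9"
  proof -
    have "n ^ 6 \<le> n ^ 9" "0 \<le> n ^ 6" using \<open>n \<ge> 1\<close> by (simp_all add: power_increasing)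
    then show ?thesis by linarith
  qed
  finally show ?thesis by (simp add: n_def)
qed

lemma card_S_set_1_le:
  assumes "N \<ge> 1"
  shows "real (card (S_set N 1)) \<le> 300000 * real_of_int N ^ 9"
proof -
  define n where "n = real_of_int N"
  have "n \<ge> 1" using assms by (simp add: n_def)
  define K where "K = (int_box N \<times> int_box N) \<times> {zero_block} \<times> {zero_block} \<times> int_box N
     \<union> {zero_block} \<times> (int_box N \<times> int_box N) \<times> {zero_block} \<times> int_box N
     \<union> {zero_block} \<times> {zero_block} \<times> (int_box N \<times> int_box N) \<times> int_box N"
  have "card K \<le> card ((int_box N \<times> int_box N) \<times> {zero_block} \<times> {zero_block} \<times> int_box N)
      + card ({zero_block} \<times> (int_box N \<times> int_box N) \<times> {zero_block} \<times> int_box N)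
      + card ({zero_block} \<times> {zero_block} \<times> (int_box N \<times> int_box N) \<times> int_box N)"
    unfolding K_def by (intro order_trans[OF card_Un_le] add_mono) simp_all
  also have "\<dots> = 3 * nat (2 * N + 1) ^ 6"
    using assms by (simp add: card_cartesian_product card_int_box flip: power_add)
  finally have "card K \<le> 3 * nat (2 * N + 1) ^ 6" .
  moreover have "card (S_set N 1) \<le> card K * nat (4 * N + 1) ^ 3"
    using card_S_set_le[OF _ offdiag_key_image_rank_1[folded K_def]] assms by (simp add: K_def)
  ultimately have "card (S_set N 1) \<le> 3 * nat (2 * N + 1) ^ 6 * nat (4 * N + 1) ^ 3"
    by (meson le_trans mult_le_mono1)
  then have "real (card (S_set N 1)) \<le> real (3 * nat (2 * N + 1) ^ 6 * nat (4 * N + 1) ^ 3)"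
    by (rule of_nat_mono)
  also have "\<dots> = 3 * (2 * n + 1) ^ 6 * (4 * n + 1) ^ 3"
    using assms by (simp add: n_def)
  also have "\<dots> \<le> 3 * (3 * n) ^ 6 * (5 * n) ^ 3"
    using \<open>n \<ge> 1\<close> by (intro mult_mono mult_left_mono power_mono) simp_all
  also have "\<dots> = 273375 * n ^ 9"
    by (simp add: power_mult_distrib flip: power_add)
  also have "\<dots> \<le> 300000 * n ^ 9"
    using assms by (simp add: n_def)
  finally show ?thesis by (simp add: n_def)
qed

lemma card_S_set_3_le:
  assumes "N \<ge> 2"
  shows "real (card (S_set N 3)) \<le> 400000000 * real_of_int N ^ 9 * ln (real_of_int N) ^ 3"
proof -
  define n L where "n = real_of_int N" and "L = ln (real_of_int N)"
  have "n \<ge> 2" "L \<ge> 0" using assms by (simp_all add: n_def L_def)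
  have "card (S_set N 3)
      \<le> card (parallel_pairs N \<times> parallel_pairs N \<times> parallel_pairs N \<times> int_box N) * nat (4 * N + 1)"
    using card_S_set_le[OF _ offdiag_key_image_rank_3] assms by simp
  also have "\<dots> = card (parallel_pairs N) ^ 3 * nat (2 * N + 1) ^ 2 * nat (4 * N + 1)"
    using assms by (simp add: card_cartesian_product card_int_box power3_eq_cube)
  finally have "real (card (S_set N 3))
      \<le> real (card (parallel_pairs N) ^ 3 * nat (2 * N + 1) ^ 2 * nat (4 * N + 1))"
    by (rule of_nat_mono)
  also have "\<dots> = real (card (parallel_pairs N)) ^ 3 * (2 * n + 1) ^ 2 * (4 * n + 1)"
    using assms by (simp add: n_def)
  also have "\<dots> \<le> (207 * n ^ 2 * L) ^ 3 * (3 * n) ^ 2 * (5 * n)"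
    using card_parallel_pairs_le[OF assms] \<open>n \<ge> 2\<close> \<open>L \<ge> 0\<close>
    by (intro mult_mono power_mono) (simp_all add: n_def L_def)
  also have "\<dots> = 399138435 * n ^ 9 * L ^ 3"
    by (simp add: power_mult_distrib flip: power_add power_Suc2)
  also have "\<dots> \<le> 400000000 * n ^ 9 * L ^ 3"
    using assms \<open>L \<ge> 0\<close> by (intro mult_right_mono) (auto simp: n_def)
  finally show ?thesis by (simp add: n_def L_def)
qed

theorem lemma4p1:
  shows "\<exists>C > 0. \<forall>N :: int. N \<ge> 2 \<longrightarrow>
    real (card (S_set N 0) + card (S_set N 1) + card (S_set N 3))
      \<le> C * real_of_int N ^ 9 * (ln (real_of_int N)) ^ 3"
proof (intro exI[of _ "10^9"] conjI allI impI)
  fix N :: int assume "N \<ge> 2"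
  define n L where "n = real_of_int N" and "L = ln (real_of_int N)"
  have "2 / 3 \<le> L" using ln_ge_two_thirds[OF \<open>N \<ge> 2\<close>] by (simp add: L_def)
  then have "8 / 27 \<le> L ^ 3"
    using power_mono[of "2 / 3" L 3] by (simp add: power_divide)
  then have "n ^ 9 * 1 \<le> n ^ 9 * (4 * L ^ 3)"
    using \<open>N \<ge> 2\<close> by (intro mult_left_mono) (simp_all add: n_def)
  moreover have "real (card (S_set N 0)) \<le> 10000 * n ^ 9" "real (card (S_set N 1)) \<le> 300000 * n ^ 9"
    using card_S_set_0_le card_S_set_1_le \<open>N \<ge> 2\<close> by (simp_all add: n_def)
  moreover have "real (card (S_set N 3)) \<le> 400000000 * (n ^ 9 * L ^ 3)"
    using card_S_set_3_le[OF \<open>N \<ge> 2\<close>] by (simp add: n_def L_def mult.assoc)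
  ultimately have "real (card (S_set N 0) + card (S_set N 1) + card (S_set N 3))
      \<le> 1000000000 * (n ^ 9 * L ^ 3)"
    by simp
  then show "real (card (S_set N 0) + card (S_set N 1) + card (S_set N 3))
      \<le> 10^9 * real_of_int N ^ 9 * (ln (real_of_int N)) ^ 3"
    by (simp add: n_def L_def mult.assoc)
qed simp

end
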